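(* Assume $n \geq 2k$. Let $y = y_T\, y_{T^*}\, c_{\underline s,\underline t}$ and let $x' = x'_{T,T^*,\underline s,\underline t}$ be the simple tensor defined in the context. Then $e\,y\,x' \neq 0$ if and only if $s_i \neq t_i$ for all pairs $(s_i,t_i)$, $i=1,\dots,k-r$. Hence $eM_{\lambda,\mu} \neq 0$ precisely when this condition can be satisfied (for some choice of $\underline s,\underline t,T,T^*$ with $T,T^*$ of shapes $\lambda,\mu$), and in that case $eM_{\lambda,\mu}$ is the linear span of all the nonzero vectors $e\,y\,x'$, with $y$ and $x'$ of this form and $T,T^*$ of shapes $\lambda,\mu$.
   Context: Let $\mathfrak g = \mathfrak{gl}_n$ (complex), $V=\mathbb C^n$ the natural module with standard basis $v_1,\dots,v_n$, $V^*$ its dual with dual basis $v_1^*,\dots,v_n^*$, and $M = V^{\otimes k}\otimes (V^* )^{\otimes k}$. For $i,j\in\{1,\dots,k\}$ the contraction map $c_{i,j}$ on $M$ is $c_{i,j}(u_1\otimes\cdots\otimes u_k\otimes w_1^*\otimes\cdots\otimes w_k^* ) = \mathrm{tr}(u_iw_j^* )\sum_{\ell=1}^n u_1\otimes\cdots\otimes v_\ell\otimes\cdots\otimes u_k\otimes w_1^*\otimes\cdots\otimes v_\ell^*\otimes\cdots\otimes w_k^*$, with $v_\ell$ in the $i$th slot of $V^{\otimes k}$ and $v_\ell^*$ in the $j$th slot of $(V^* )^{\otimes k}$. Put $p_i = \frac1n c_{i,i}$ (commuting idempotents) and $e = (\mathrm{id}-p_1)(\mathrm{id}-p_2)\cdots(\mathrm{id}-p_k)$,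 so that $eM\cong \mathfrak{sl}_n^{\otimes k}$. For $0\le r\le k$, let $\underline s=\{s_1<\dots<s_{k-r}\}$ and $\underline t=\{t_1,\dots,t_{k-r}\}$ be ordered subsets of $\{1,\dots,k\}$ of size $k-r$, and $c_{\underline s,\underline t} = c_{s_1,t_1}\cdots c_{s_{k-r},t_{k-r}}$. Let $\lambda,\mu$ be partitions of $r$, $T$ a standard tableau of shape $\lambda$ with entries in $\underline s^c=\{1,\dots,k\}\setminus\underline s$, and $T^*$ a standard tableau of shape $\mu$ with entries in $\underline t^c$. The Young symmetrizer is $y_T = (\sum_{\rho\in R_T}\rho)(\sum_{\gamma\in C_T}\mathrm{sgn}(\gamma)\gamma)$ ($R_T$, $C_T$ the row and column groups of $T$), acting on $V^{\otimes k}$ by place permutations; $y_{T^*}$ acts likewise on $(V^* )^{\otimes k}$. The simple tensor $x'=x'_{T,T^*,\underline s,\underline t}=u_1'\otimes\cdots\otimes u_k'\otimes (w_1^* )'\otimes\cdots\otimes (w_k^* )'$ is defined by $u_p' = v_{r+i}$ if $p=s_i$, $u_p'=v_j$ if $p\in\underline s^c$ lies in row $j$ of $T$; $(w_p^* )' = v_{r+i}^*$ if $p=t_i$, $(w_p^* )'=v^*_{n-j+1}$ if $p\in\underline t^c$ lies in row $j$ of $T^*$. (The vector $yx'$ equals $yx$ for the analogous tensor $x$ with $v_1, v_1^*$ in the slots $s_i,t_i$, and is a maximal vector of highest weight $(\lambda,\mu)$.) $M_{\lambda,\mu}$ denotes the span of all such maximal vectors $y x'$ over all pairs $\underline s,\underline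 t$ of ordered subsets of size $k-r$ and all standard tableaux $T$ (resp. $T^*$) of shape $\lambda$ (resp. $\mu$) with entries in $\underline s^c$ (resp. $\underline t^c$); for $n\ge 2k$ these are the irreducible modules for $\mathrm{End}_{\mathfrak g}(M)$. *)

theory Defs
  imports Complex_Main "HOL-Combinatorics.Permutations"
begin

text \<open>Elements of M = V^{\<otimes>k} \<otimes> (V^*)^{\<otimes>k} are represented by their coefficient
functions with respect to the basis v_{a 1} \<otimes> ... \<otimes> v_{a k} \<otimes> v^*_{b 1} \<otimes> ... \<otimes> v^*_{b k},
indexed by pairs (a,b) of functions with a p, b p \<in> {1..n} for p \<in> {1..k} and
a p = b p = 0 otherwise (slots and basis indices are 1-based, as in the paper).\<close>

type_synonym tens = "(nat \<Rightarrow> nat) \<times> (nat \<Rightarrow> nat) \<Rightarrow> complex"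

definition idx :: "nat \<Rightarrow> nat \<Rightarrow> ((nat \<Rightarrow> nat) \<times> (nat \<Rightarrow> nat)) set" where
  "idx n k = {(a,b). (\<forall>p\<in>{1..k}. a p \<in> {1..n} \<and> b p \<in> {1..n}) \<and>
                     (\<forall>p. p \<notin> {1..k} \<longrightarrow> a p = 0 \<and> b p = 0)}"

definition contr :: "nat \<Rightarrow> nat \<Rightarrow> nat \<Rightarrow> nat \<Rightarrow> tens \<Rightarrow> tens" where
  "contr n k i j x = (\<lambda>(a,b). if (a,b) \<in> idx n k \<and> a i = b j
       then (\<Sum>m\<in>{1..n}. x (a(i := m), b(j := m))) else 0)"

definition one_minus_p :: "nat \<Rightarrow> nat \<Rightarrow> nat \<Rightarrow> tens \<Rightarrow> tens" where
  "one_minus_p n k i x = (\<lambda>z. x z - (1 / of_nat n) * contr n k i i x z)"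

definition emap :: "nat \<Rightarrow> nat \<Rightarrow> tens \<Rightarrow> tens" where
  "emap n k x = foldr (one_minus_p n k) [1..<k+1] x"

definition contr_list :: "nat \<Rightarrow> nat \<Rightarrow> nat list \<Rightarrow> nat list \<Rightarrow> tens \<Rightarrow> tens" where
  "contr_list n k s t x = foldr (\<lambda>(i,j). contr n k i j) (zip s t) x"

text \<open>Partitions and standard tableaux (a tableau is the list of its rows).\<close>
definition is_partition :: "nat \<Rightarrow> nat list \<Rightarrow> bool" where
  "is_partition r lam \<longleftrightarrow> sorted_wrt (\<ge>) lam \<and> 0 \<notin> set lam \<and> sum_list lam = r"

definition standard_tableau :: "nat list list \<Rightarrow> nat list \<Rightarrow> nat set \<Rightarrow> bool" where
  "standard_tableau T lam S \<longleftrightarrow> map length T = lam \<and>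
     (\<forall>row\<in>set T. sorted_wrt (<) row) \<and>
     (\<forall>i j. i + 1 < length T \<and> j < length (T ! (i+1)) \<longrightarrow> T ! i ! j < T ! (i+1) ! j) \<and>
     distinct (concat T) \<and> set (concat T) = S"

definition col_set :: "nat list list \<Rightarrow> nat \<Rightarrow> nat set" where
  "col_set T j = {T ! i ! j | i. i < length T \<and> j < length (T ! i)}"

definition row_group :: "nat list list \<Rightarrow> (nat \<Rightarrow> nat) set" where
  "row_group T = {\<sigma>. \<sigma> permutes set (concat T) \<and> (\<forall>row\<in>set T. \<sigma> ` set row = set row)}"

definition col_group :: "nat list list \<Rightarrow> (nat \<Rightarrow> nat) set" where
  "col_group T = {\<sigma>. \<sigma> permutes set (concat T) \<and> (\<forall>j. \<sigma> ` col_set T j = col_set T j)}"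

text \<open>Place permutation \<sigma> acts by (\<sigma> x)(a,b) = x (a \<circ> \<sigma>, b) on the V-factors
  (i.e. \<sigma> sends the vector in slot p to slot \<sigma> p; a left action), and likewise
  on the V^*-factors.\<close>
definition youngV :: "nat list list \<Rightarrow> tens \<Rightarrow> tens" where
  "youngV T x = (\<lambda>(a,b). \<Sum>\<rho>\<in>row_group T. \<Sum>\<gamma>\<in>col_group T.
       of_int (sign \<gamma>) * x (a \<circ> (\<rho> \<circ> \<gamma>), b))"

definition youngVs :: "nat list list \<Rightarrow> tens \<Rightarrow> tens" where
  "youngVs T x = (\<lambda>(a,b). \<Sum>\<rho>\<in>row_group T. \<Sum>\<gamma>\<in>col_group T.
       of_int (sign \<gamma>) * x (a, b \<circ> (\<rho> \<circ> \<gamma>)))"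

definition yop :: "nat \<Rightarrow> nat \<Rightarrow> nat list list \<Rightarrow> nat list list \<Rightarrow> nat list \<Rightarrow> nat list \<Rightarrow> tens \<Rightarrow> tens" where
  "yop n k T Ts s t x = youngV T (youngVs Ts (contr_list n k s t x))"

text \<open>1-based row index of entry p in tableau T\<close>
definition row_of :: "nat list list \<Rightarrow> nat \<Rightarrow> nat" where
  "row_of T p = (LEAST j. j < length T \<and> p \<in> set (T ! j)) + 1"

text \<open>1-based position of p in list xs\<close>
definition pos :: "nat list \<Rightarrow> nat \<Rightarrow> nat" where
  "pos xs p = (LEAST i. i < length xs \<and> xs ! i = p) + 1"

definition xprime :: "nat \<Rightarrow> nat \<Rightarrow> nat list list \<Rightarrow> nat list list \<Rightarrow> nat list \<Rightarrow> nat list \<Rightarrow> tens" where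
  "xprime n k T Ts s t =
     (let r = k - length s;
          a0 = (\<lambda>p. if p \<in> set s then r + pos s p
                    else if p \<in> set (concat T) then row_of T p else 0);
          b0 = (\<lambda>p. if p \<in> set t then r + pos t p
                    else if p \<in> set (concat Ts) then n - row_of Ts p + 1 else 0)
      in (\<lambda>z. if z = (a0, b0) then 1 else 0))"

definition data_ok :: "nat \<Rightarrow> nat \<Rightarrow> nat \<Rightarrow> nat list \<Rightarrow> nat list \<Rightarrow> nat list \<Rightarrow> nat list
                       \<Rightarrow> nat list list \<Rightarrow> nat list list \<Rightarrow> bool" where
  "data_ok n k r s t lam mu T Ts \<longleftrightarrow> r \<le> k \<and> length s = k - r \<and> length t = k - r \<and>
     sorted_wrt (<) s \<and> distinct t \<and> set s \<subseteq> {1..k} \<and> set t \<subseteq> {1..k} \<and>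
     is_partition r lam \<and> is_partition r mu \<and>
     standard_tableau T lam ({1..k} - set s) \<and> standard_tableau Ts mu ({1..k} - set t)"

definition lin_span :: "tens set \<Rightarrow> tens set" where
  "lin_span S = {f. \<exists>F c. finite F \<and> F \<subseteq> S \<and> f = (\<lambda>z. \<Sum>v\<in>F. c v * v z)}"

definition Mlm :: "nat \<Rightarrow> nat \<Rightarrow> nat list \<Rightarrow> nat list \<Rightarrow> tens set" where
  "Mlm n k lam mu = lin_span {yop n k T Ts s t (xprime n k T Ts s t) | s t T Ts.
       data_ok n k (sum_list lam) s t lam mu T Ts}"

end

theory Submission
  imports Defs
begin

text \<open>
  The simple tensor x' is the basis vector at an index (a, b) with a p = b p exactly when
  p = s_i = t_i for some i: the labels r+1..k (slots of s and t), 1..r (rows of T) and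
  n-r+1..n (rows of T^*) are disjoint because n \<ge> 2k. Since
  c_{p,p} w vanishes at indices with a p \<noteq> b p, the coefficient of e w at (a, b) is that of w
  whenever all s_i \<noteq> t_i. The coefficient of y x' at (a, b) is |R_T| |R_{T^*}|: the
  contraction contributes 1, row permutations fix the row-constant labels, and a column
  permutation fixing them is trivial. Conversely, if s_i = t_i = p, then c_{p,p} produces a tensor
  which is the identity in the slot pair (p, p); this property survives the other contractions,
  the Young symmetrizers (which do not touch slot p) and the factors id - p_q with q \<noteq> p, and
  id - p_p kills it. The statements on M_{\<lambda>,\<mu>} follow by linearity of e.
\<close>

section \<open>Rows of tableaux\<close>

lemma concat_row_unique:
  assumes "distinct (concat T)" "i < length T" "j < length T" "p \<in> set (T ! i)" "p \<in> set (T ! j)"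
  shows "i = j"
  using assms
proof (induction T arbitrary: i j)
  case Nil
  then show ?case by simp
next
  case (Cons row T)
  then show ?case
    by (cases i; cases j) (auto dest!: nth_mem[of _ T] simp: disjoint_iff)
qed

lemma row_of_nth:
  assumes "distinct (concat T)" "i < length T" "p \<in> set (T ! i)"
  shows "row_of T p = Suc i"
proof -
  have "(LEAST j. j < length T \<and> p \<in> set (T ! j)) = i"
    by (rule Least_equality) (use assms concat_row_unique[OF assms(1)] in force)+
  then show ?thesis by (simp add: row_of_def)
qed

lemma in_set_concatE:
  assumes "p \<in> set (concat T)"
  obtains i where "i < length T" "p \<in> set (T ! i)"
proof -
  from assms obtain row where "row \<in> set T" "p \<in> set row" by auto
  then show ?thesis using that by (auto simp: in_set_conv_nth)
qed

lemma row_of_range: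
  assumes "distinct (concat T)" "p \<in> set (concat T)"
  shows "row_of T p \<in> {1..length T}"
  using assms(2) by (rule in_set_concatE) (auto simp: row_of_nth[OF assms(1)])

lemma pos_nth:
  assumes "distinct xs" "i < length xs"
  shows "pos xs (xs ! i) = Suc i"
proof -
  have "(LEAST j. j < length xs \<and> xs ! j = xs ! i) = i"
    by (rule Least_equality) (use assms nth_eq_iff_index_eq in auto)
  then show ?thesis by (simp add: pos_def)
qed

lemma length_le_sum_list:
  assumes "0 \<notin> set (xs :: nat list)"
  shows "length xs \<le> sum_list xs"
  using assms by (induction xs) (auto simp: Suc_le_eq)

lemma standard_tableau_length_le:
  assumes "standard_tableau T lam S" "is_partition r lam"
  shows "length T \<le> r"
  using assms length_le_sum_list[of lam]
  by (auto simp: standard_tableau_def is_partition_def dest: arg_cong[of _ _ length])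

lemma data_okD:
  assumes "data_ok n k r s t lam mu T Ts"
  shows "r \<le> k" "length s = k - r" "length t = k - r" "distinct s" "distinct t"
    "set s \<subseteq> {1..k}" "set t \<subseteq> {1..k}"
    "distinct (concat T)" "set (concat T) = {1..k} - set s" "length T \<le> r"
    "distinct (concat Ts)" "set (concat Ts) = {1..k} - set t" "length Ts \<le> r"
  using assms standard_tableau_length_le
  by (auto simp: data_ok_def standard_tableau_def strict_sorted_iff)

section \<open>Young symmetrizers on row-constant indices\<close>

lemma row_group_permutes: "\<rho> \<in> row_group T \<Longrightarrow> \<rho> permutes set (concat T)"
  by (simp add: row_group_def)

lemma col_group_permutes: "\<gamma> \<in> col_group T \<Longrightarrow> \<gamma> permutes set (concat T)"
  by (simp add: col_group_def)

lemma finite_row_group: "finite (row_group T)"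
  by (rule finite_subset[OF _ finite_permutations[of "set (concat T)"]]) (auto simp: row_group_def)

lemma finite_col_group: "finite (col_group T)"
  by (rule finite_subset[OF _ finite_permutations[of "set (concat T)"]]) (auto simp: col_group_def)

lemma id_in_row_group: "id \<in> row_group T"
  by (simp add: row_group_def)

lemma id_in_col_group: "id \<in> col_group T"
  by (simp add: col_group_def)

text \<open>Swapping the V- and V^*-indices turns y_{T^*} into y_T, so statements about
  youngVs follow from those about youngV.\<close>

definition flip_tens :: "tens \<Rightarrow> tens" where
  "flip_tens w = (\<lambda>(a, b). w (b, a))"

lemma flip_tens_apply [simp]: "flip_tens w (a, b) = w (b, a)"
  by (simp add: flip_tens_def)

lemma youngVs_eq_flip: "youngVs T w = flip_tens (youngV T (flip_tens w))"
  by (simp add: youngVs_def youngV_def flip_tens_def)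

lemma youngV_nonzeroE:
  assumes "youngV T w (a, b) \<noteq> 0"
  obtains \<sigma> where "\<sigma> permutes set (concat T)" "w (a \<circ> \<sigma>, b) \<noteq> 0"
proof -
  have "(\<Sum>\<rho>\<in>row_group T. \<Sum>\<gamma>\<in>col_group T. of_int (sign \<gamma>) * w (a \<circ> (\<rho> \<circ> \<gamma>), b)) \<noteq> 0"
    using assms by (simp add: youngV_def)
  then obtain \<rho> where \<rho>: "\<rho> \<in> row_group T"
    "(\<Sum>\<gamma>\<in>col_group T. of_int (sign \<gamma>) * w (a \<circ> (\<rho> \<circ> \<gamma>), b)) \<noteq> 0"
    by (rule sum.not_neutral_contains_not_neutral)
  from \<rho>(2) obtain \<gamma> where \<gamma>: "\<gamma> \<in> col_group T" "of_int (sign \<gamma>) * w (a \<circ> (\<rho> \<circ> \<gamma>), b) \<noteq> 0"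
    by (rule sum.not_neutral_contains_not_neutral)
  show ?thesis
  proof (rule that)
    show "\<rho> \<circ> \<gamma> permutes set (concat T)"
      using permutes_compose[OF col_group_permutes[OF \<gamma>(1)] row_group_permutes[OF \<rho>(1)]] .
    show "w (a \<circ> (\<rho> \<circ> \<gamma>), b) \<noteq> 0" using \<gamma>(2) by simp
  qed
qed

lemma youngVs_nonzeroE:
  assumes "youngVs T w (a, b) \<noteq> 0"
  obtains \<sigma> where "\<sigma> permutes set (concat T)" "w (a, b \<circ> \<sigma>) \<noteq> 0"
  using assms by (auto simp: youngVs_eq_flip elim: youngV_nonzeroE)

lemma comp_row_group_eq:
  assumes "distinct (concat T)" "\<rho> \<in> row_group T" "\<forall>p\<in>set (concat T). a p = h (row_of T p)"
  shows "a \<circ> \<rho> = a"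
proof
  fix p
  have \<rho>: "\<rho> permutes set (concat T)" using assms(2) by (rule row_group_permutes)
  show "(a \<circ> \<rho>) p = a p"
  proof (cases "p \<in> set (concat T)")
    case False
    then show ?thesis using permutes_not_in[OF \<rho>] by simp
  next
    case True
    then obtain i where i: "i < length T" "p \<in> set (T ! i)" by (rule in_set_concatE)
    have "\<rho> ` set (T ! i) = set (T ! i)" using assms(2) i(1) by (simp add: row_group_def)
    then have "\<rho> p \<in> set (T ! i)" using i(2) by blast
    then have "row_of T (\<rho> p) = row_of T p"
      using row_of_nth[OF assms(1) i(1)] i(2) by simp
    moreover have "\<rho> p \<in> set (concat T)" using True permutes_in_image[OF \<rho>] by blast
    ultimately show ?thesis using bspec[OF assms(3) True] bspec[OF assms(3)] by simp
  qed
qed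

lemma col_group_eq_id:
  assumes "distinct (concat T)" "\<gamma> \<in> col_group T" "\<forall>p\<in>set (concat T). a p = h (row_of T p)"
    "inj_on h {1..length T}" "a \<circ> \<gamma> = a"
  shows "\<gamma> = id"
proof
  fix p
  have \<gamma>: "\<gamma> permutes set (concat T)" using assms(2) by (rule col_group_permutes)
  show "\<gamma> p = id p"
  proof (cases "p \<in> set (concat T)")
    case False
    then show ?thesis using permutes_not_in[OF \<gamma>] by simp
  next
    case True
    then obtain i where i: "i < length T" "p \<in> set (T ! i)" by (rule in_set_concatE)
    then obtain j where j: "j < length (T ! i)" "p = T ! i ! j" by (auto simp: in_set_conv_nth)
    have "p \<in> col_set T j" using i j by (auto simp: col_set_def)
    then have "\<gamma> p \<in> col_set T j" using assms(2) by (auto simp: col_group_def)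
    then obtain i' where i': "i' < length T" "j < length (T ! i')" "\<gamma> p = T ! i' ! j"
      by (auto simp: col_set_def)
    have "\<gamma> p \<in> set (concat T)" using True permutes_in_image[OF \<gamma>] by blast
    moreover have "\<gamma> p \<in> set (T ! i')" using i'(2,3) by simp
    ultimately have "a (\<gamma> p) = h (Suc i')"
      using bspec[OF assms(3)] row_of_nth[OF assms(1) i'(1)] by simp
    moreover have "a p = h (Suc i)" using bspec[OF assms(3) True] row_of_nth[OF assms(1) i] by simp
    moreover have "a (\<gamma> p) = a p" using fun_cong[OF assms(5), of p] by simp
    ultimately have "h (Suc i') = h (Suc i)" by simp
    then have "i' = i" using assms(4) i(1) i'(1) by (auto dest: inj_onD)
    then show ?thesis using i' j by simp
  qed
qed

lemma youngV_apply_row_labelling: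
  assumes "distinct (concat T)" "\<forall>p\<in>set (concat T). a p = h (row_of T p)" "inj_on h {1..length T}"
    and supp: "\<And>a' b'. w (a', b') \<noteq> 0 \<Longrightarrow> \<forall>p\<in>set (concat T). a' p = a p"
  shows "youngV T w (a, b) = of_nat (card (row_group T)) * w (a, b)"
proof -
  have "of_int (sign \<gamma>) * w (a \<circ> (\<rho> \<circ> \<gamma>), b) = (if \<gamma> = id then w (a, b) else 0)"
    if \<rho>: "\<rho> \<in> row_group T" and \<gamma>: "\<gamma> \<in> col_group T" for \<rho> \<gamma>
  proof -
    have "a \<circ> (\<rho> \<circ> \<gamma>) = a \<circ> \<gamma>"
      using comp_row_group_eq[OF assms(1) \<rho> assms(2)] by (simp add: comp_assoc[symmetric])
    moreover have "\<gamma> = id" if "w (a \<circ> \<gamma>, b) \<noteq> 0"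
    proof (rule col_group_eq_id[OF assms(1) \<gamma> assms(2,3)])
      have "(a \<circ> \<gamma>) p = a p" if "p \<in> set (concat T)" for p
        using supp[OF \<open>w (a \<circ> \<gamma>, b) \<noteq> 0\<close>] that by blast
      moreover have "(a \<circ> \<gamma>) p = a p" if "p \<notin> set (concat T)" for p
        using permutes_not_in[OF col_group_permutes[OF \<gamma>] that] by simp
      ultimately show "a \<circ> \<gamma> = a" by blast
    qed
    ultimately show ?thesis by (auto simp: sign_id)
  qed
  then have "youngV T w (a, b) = (\<Sum>\<rho>\<in>row_group T. \<Sum>\<gamma>\<in>col_group T. if \<gamma> = id then w (a, b) else 0)"
    by (simp add: youngV_def)
  also have "\<dots> = of_nat (card (row_group T)) * w (a, b)"
    by (simp add: finite_col_group id_in_col_group)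
  finally show ?thesis .
qed

lemma youngVs_apply_row_labelling:
  assumes "distinct (concat T)" "\<forall>p\<in>set (concat T). b p = h (row_of T p)" "inj_on h {1..length T}"
    and "\<And>a' b'. w (a', b') \<noteq> 0 \<Longrightarrow> \<forall>p\<in>set (concat T). b' p = b p"
  shows "youngVs T w (a, b) = of_nat (card (row_group T)) * w (a, b)"
  using youngV_apply_row_labelling[of T b h "flip_tens w" a] assms by (simp add: youngVs_eq_flip)

section \<open>Tensors that are the identity in a slot pair\<close>

lemma idx_flip: "(b, a) \<in> idx n k \<longleftrightarrow> (a, b) \<in> idx n k"
  by (auto simp: idx_def)

lemma idx_comp_permutes:
  assumes "\<sigma> permutes {1..k}"
  shows "(a \<circ> \<sigma>, b) \<in> idx n k \<longleftrightarrow> (a, b) \<in> idx n k"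
proof -
  have "(\<forall>p\<in>{1..k}. a (\<sigma> p) \<in> {1..n}) \<longleftrightarrow> (\<forall>q\<in>\<sigma> ` {1..k}. a q \<in> {1..n})"
    by simp
  then have "(\<forall>p\<in>{1..k}. a (\<sigma> p) \<in> {1..n}) \<longleftrightarrow> (\<forall>q\<in>{1..k}. a q \<in> {1..n})"
    by (simp only: permutes_image[OF assms])
  moreover have "\<sigma> p = p" if "p \<notin> {1..k}" for p
    using permutes_not_in[OF assms that] .
  ultimately show ?thesis unfolding idx_def by auto
qed

lemma idx_upd_slot:
  assumes "p \<in> {1..k}" "m \<in> {1..n}" "m' \<in> {1..n}"
  shows "(a(p := m), b(p := m)) \<in> idx n k \<longleftrightarrow> (a(p := m'), b(p := m')) \<in> idx n k"
  using assms unfolding idx_def by auto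

text \<open>The tensors fixed by p_p = c_{p,p}/n, i.e. those of the form id_V \<otimes> (\<dots>) in the slot
  pair (p, p).\<close>

definition contracted_in_slot :: "nat \<Rightarrow> nat \<Rightarrow> nat \<Rightarrow> tens \<Rightarrow> bool" where
  "contracted_in_slot n k p w \<longleftrightarrow>
     (\<forall>a b. w (a, b) \<noteq> 0 \<longrightarrow> (a, b) \<in> idx n k \<and> a p = b p) \<and>
     (\<forall>a b m m'. m \<in> {1..n} \<longrightarrow> m' \<in> {1..n} \<longrightarrow>
        w (a(p := m), b(p := m)) = w (a(p := m'), b(p := m')))"

lemma contracted_in_slotI:
  assumes "\<And>a b. w (a, b) \<noteq> 0 \<Longrightarrow> (a, b) \<in> idx n k \<and> a p = b p"
    and "\<And>a b m m'. m \<in> {1..n} \<Longrightarrow> m' \<in> {1..n} \<Longrightarrow>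
           w (a(p := m), b(p := m)) = w (a(p := m'), b(p := m'))"
  shows "contracted_in_slot n k p w"
  using assms unfolding contracted_in_slot_def by blast

lemma contracted_in_slotD:
  assumes "contracted_in_slot n k p w"
  shows "w (a, b) \<noteq> 0 \<Longrightarrow> (a, b) \<in> idx n k \<and> a p = b p"
    and "m \<in> {1..n} \<Longrightarrow> m' \<in> {1..n} \<Longrightarrow> w (a(p := m), b(p := m)) = w (a(p := m'), b(p := m'))"
  using assms unfolding contracted_in_slot_def by blast+

lemma contracted_in_slot_contr_same:
  assumes "p \<in> {1..k}"
  shows "contracted_in_slot n k p (contr n k p p w)"
proof (rule contracted_in_slotI)
  fix a b
  show "contr n k p p w (a, b) \<noteq> 0 \<Longrightarrow> (a, b) \<in> idx n k \<and> a p = b p"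
    by (auto simp: contr_def split: if_splits)
next
  fix a b m m'
  assume m: "m \<in> {1..n}" "m' \<in> {1..n}"
  show "contr n k p p w (a(p := m), b(p := m)) = contr n k p p w (a(p := m'), b(p := m'))"
    using idx_upd_slot[OF assms m] by (simp add: contr_def)
qed

lemma contracted_in_slot_contr_other:
  assumes "p \<in> {1..k}" "i \<noteq> p" "j \<noteq> p" and w: "contracted_in_slot n k p w"
  shows "contracted_in_slot n k p (contr n k i j w)"
proof (rule contracted_in_slotI)
  fix a b
  assume "contr n k i j w (a, b) \<noteq> 0"
  then have ab: "(a, b) \<in> idx n k" and "(\<Sum>m\<in>{1..n}. w (a(i := m), b(j := m))) \<noteq> 0"
    by (auto simp: contr_def split: if_splits)
  then obtain m where m: "w (a(i := m), b(j := m)) \<noteq> 0"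
    using sum.not_neutral_contains_not_neutral by blast
  with ab show "(a, b) \<in> idx n k \<and> a p = b p"
    using contracted_in_slotD(1)[OF w m] assms(2,3) by simp
next
  fix a b m m'
  assume m: "m \<in> {1..n}" "m' \<in> {1..n}"
  have "w (a(p := m, i := x), b(p := m, j := x)) = w (a(p := m', i := x), b(p := m', j := x))" for x
    using contracted_in_slotD(2)[OF w m, of "a(i := x)" "b(j := x)"] assms(2,3)
    by (simp add: fun_upd_twist)
  then show "contr n k i j w (a(p := m), b(p := m)) = contr n k i j w (a(p := m'), b(p := m'))"
    using assms(2,3) by (simp add: contr_def idx_upd_slot[OF assms(1) m])
qed

lemma contracted_in_slot_foldr_contr:
  assumes "p \<in> {1..k}" "distinct (map fst L)" "distinct (map snd L)" "(p, p) \<in> set L"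
  shows "contracted_in_slot n k p (foldr (\<lambda>(i, j). contr n k i j) L w)"
  using assms(2-4)
proof (induction L)
  case Nil
  then show ?case by simp
next
  case (Cons ij L)
  obtain i j where ij: "ij = (i, j)" by force
  show ?case
  proof (cases "(i, j) = (p, p)")
    case True
    then show ?thesis using ij contracted_in_slot_contr_same[OF assms(1)] by simp
  next
    case False
    then have "(p, p) \<in> set L" using Cons.prems ij by auto
    moreover from this have "i \<noteq> p" "j \<noteq> p"
      using Cons.prems(1,2) ij by (auto simp: image_iff)
    ultimately show ?thesis
      using Cons ij contracted_in_slot_contr_other[OF assms(1)] by simp
  qed
qed

lemma contracted_in_slot_one_minus_p_other:
  assumes "p \<in> {1..k}" "q \<noteq> p" and w: "contracted_in_slot n k p w"
  shows "contracted_in_slot n k p (one_minus_p n k q w)"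
proof -
  have c: "contracted_in_slot n k p (contr n k q q w)"
    using contracted_in_slot_contr_other[OF assms(1,2,2) w] .
  show ?thesis
  proof (rule contracted_in_slotI)
    fix a b
    assume "one_minus_p n k q w (a, b) \<noteq> 0"
    then have "w (a, b) \<noteq> 0 \<or> contr n k q q w (a, b) \<noteq> 0" by (auto simp: one_minus_p_def)
    then show "(a, b) \<in> idx n k \<and> a p = b p"
      using contracted_in_slotD(1)[OF w] contracted_in_slotD(1)[OF c] by blast
  next
    fix a b m m'
    assume m: "m \<in> {1..n}" "m' \<in> {1..n}"
    show "one_minus_p n k q w (a(p := m), b(p := m)) = one_minus_p n k q w (a(p := m'), b(p := m'))"
      using contracted_in_slotD(2)[OF w m] contracted_in_slotD(2)[OF c m] by (simp add: one_minus_p_def)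
  qed
qed

lemma one_minus_p_eq_zero_if_contracted_in_slot:
  assumes "0 < n" "p \<in> {1..k}" and w: "contracted_in_slot n k p w"
  shows "one_minus_p n k p w = (\<lambda>_. 0)"
proof (rule ext, clarify)
  fix a b
  show "one_minus_p n k p w (a, b) = 0"
  proof (cases "(a, b) \<in> idx n k \<and> a p = b p")
    case True
    then have "a p \<in> {1..n}" using assms(2) by (auto simp: idx_def)
    moreover have "a(p := a p) = a" "b(p := a p) = b" using True by auto
    ultimately have "w (a(p := m), b(p := m)) = w (a, b)" if "m \<in> {1..n}" for m
      using contracted_in_slotD(2)[OF w that, of "a p" a b] by simp
    then have "contr n k p p w (a, b) = of_nat n * w (a, b)"
      using True by (simp add: contr_def)
    then show ?thesis using assms(1) by (simp add: one_minus_p_def)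
  next
    case False
    then show ?thesis
      using contracted_in_slotD(1)[OF w] by (auto simp: one_minus_p_def contr_def)
  qed
qed

lemma emap_eq_zero_if_contracted_in_slot:
  assumes "0 < n" "p \<in> {1..k}" "contracted_in_slot n k p w"
  shows "emap n k w = (\<lambda>_. 0)"
proof -
  have "contracted_in_slot n k p (foldr (one_minus_p n k) L w) \<and>
        (p \<in> set L \<longrightarrow> foldr (one_minus_p n k) L w = (\<lambda>_. 0))" for L
  proof (induction L)
    case Nil
    then show ?case using assms(3) by simp
  next
    case (Cons q L)
    have "contracted_in_slot n k p (\<lambda>_. 0)" by (simp add: contracted_in_slot_def)
    moreover have "one_minus_p n k q (\<lambda>_. 0) = (\<lambda>_. 0)"
      by (auto simp: one_minus_p_def contr_def fun_eq_iff)
    ultimately show ?case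
      using Cons one_minus_p_eq_zero_if_contracted_in_slot[OF assms(1,2)]
        contracted_in_slot_one_minus_p_other[OF assms(2)]
      by (cases "q = p") auto
  qed
  moreover have "p \<in> set [1..<k + 1]" using assms(2) by auto
  ultimately show ?thesis unfolding emap_def by blast
qed

lemma fun_upd_comp_permutes:
  assumes "\<sigma> permutes S" "p \<notin> S"
  shows "a(p := m) \<circ> \<sigma> = (a \<circ> \<sigma>)(p := m)"
proof
  fix x
  have "inv \<sigma> p = p" using permutes_not_in[OF permutes_inv[OF assms(1)] assms(2)] .
  then have "\<sigma> x = p \<longleftrightarrow> x = p" using permutes_inv_eq[OF assms(1), of p x] by auto
  then show "(a(p := m) \<circ> \<sigma>) x = ((a \<circ> \<sigma>)(p := m)) x" by simp
qed

lemma contracted_in_slot_flip: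
  assumes "contracted_in_slot n k p w"
  shows "contracted_in_slot n k p (flip_tens w)"
proof (rule contracted_in_slotI)
  fix a b
  assume "flip_tens w (a, b) \<noteq> 0"
  then show "(a, b) \<in> idx n k \<and> a p = b p"
    using contracted_in_slotD(1)[OF assms, of b a] by (auto simp: idx_flip)
next
  fix a b m m'
  assume "m \<in> {1..n}" "m' \<in> {1..n}"
  then show "flip_tens w (a(p := m), b(p := m)) = flip_tens w (a(p := m'), b(p := m'))"
    using contracted_in_slotD(2)[OF assms, of m m' b a] by simp
qed

lemma contracted_in_slot_youngV:
  assumes "p \<notin> set (concat T)" "set (concat T) \<subseteq> {1..k}" and w: "contracted_in_slot n k p w"
  shows "contracted_in_slot n k p (youngV T w)"
proof (rule contracted_in_slotI)
  fix a b
  assume "youngV T w (a, b) \<noteq> 0"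
  then obtain \<sigma> where \<sigma>: "\<sigma> permutes set (concat T)" "w (a \<circ> \<sigma>, b) \<noteq> 0"
    by (rule youngV_nonzeroE)
  have "(a \<circ> \<sigma>, b) \<in> idx n k \<and> (a \<circ> \<sigma>) p = b p"
    by (rule contracted_in_slotD(1)[OF w \<sigma>(2)])
  then show "(a, b) \<in> idx n k \<and> a p = b p"
    using idx_comp_permutes[OF permutes_subset[OF \<sigma>(1) assms(2)]]
      permutes_not_in[OF \<sigma>(1) assms(1)] by simp
next
  fix a b m m'
  assume m: "m \<in> {1..n}" "m' \<in> {1..n}"
  have "w (a(p := m) \<circ> \<sigma>, b(p := m)) = w (a(p := m') \<circ> \<sigma>, b(p := m'))"
    if "\<sigma> permutes set (concat T)" for \<sigma>
    using contracted_in_slotD(2)[OF w m] by (simp add: fun_upd_comp_permutes[OF that assms(1)])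
  then show "youngV T w (a(p := m), b(p := m)) = youngV T w (a(p := m'), b(p := m'))"
    using permutes_compose[OF col_group_permutes row_group_permutes]
    by (auto simp: youngV_def intro!: sum.cong)
qed

lemma contracted_in_slot_youngVs:
  assumes "p \<notin> set (concat T)" "set (concat T) \<subseteq> {1..k}" "contracted_in_slot n k p w"
  shows "contracted_in_slot n k p (youngVs T w)"
  unfolding youngVs_eq_flip
  using assms by (intro contracted_in_slot_flip contracted_in_slot_youngV)

section \<open>The coefficient of y x' at the index of x'\<close>

definition basis_tens :: "(nat \<Rightarrow> nat) \<times> (nat \<Rightarrow> nat) \<Rightarrow> tens" where
  "basis_tens z0 = (\<lambda>z. if z = z0 then 1 else 0)"

definition label_V :: "nat \<Rightarrow> nat list list \<Rightarrow> nat list \<Rightarrow> nat \<Rightarrow> nat" where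
  "label_V r T s p =
     (if p \<in> set s then r + pos s p else if p \<in> set (concat T) then row_of T p else 0)"

definition label_Vs :: "nat \<Rightarrow> nat \<Rightarrow> nat list list \<Rightarrow> nat list \<Rightarrow> nat \<Rightarrow> nat" where
  "label_Vs n r Ts t p =
     (if p \<in> set t then r + pos t p else if p \<in> set (concat Ts) then n - row_of Ts p + 1 else 0)"

lemma xprime_eq_basis_tens:
  "xprime n k T Ts s t = basis_tens (label_V (k - length s) T s, label_Vs n (k - length s) Ts t)"
  by (simp add: xprime_def Let_def basis_tens_def label_V_def[abs_def] label_Vs_def[abs_def])

lemma label_V_nth: "distinct s \<Longrightarrow> l < length s \<Longrightarrow> label_V r T s (s ! l) = r + Suc l"
  by (simp add: label_V_def pos_nth)

lemma label_Vs_nth: "distinct t \<Longrightarrow> l < length t \<Longrightarrow> label_Vs n r Ts t (t ! l) = r + Suc l"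
  by (simp add: label_Vs_def pos_nth)

lemma label_V_range:
  assumes "data_ok n k r s t lam mu T Ts" "p \<in> {1..k}"
  shows "p \<in> set s \<Longrightarrow> label_V r T s p \<in> {r<..k}"
    and "p \<notin> set s \<Longrightarrow> label_V r T s p \<in> {1..r}"
proof -
  note D = data_okD[OF assms(1)]
  show "label_V r T s p \<in> {r<..k}" if p: "p \<in> set s"
  proof -
    obtain l where "l < length s" "p = s ! l" using p by (auto simp: in_set_conv_nth)
    then show ?thesis using D label_V_nth by auto
  qed
  show "label_V r T s p \<in> {1..r}" if "p \<notin> set s"
    using that assms(2) D row_of_range[of T p] by (force simp: label_V_def)
qed

lemma label_Vs_range:
  assumes "data_ok n k r s t lam mu T Ts" "k \<le> n" "p \<in> {1..k}"
  shows "p \<in> set t \<Longrightarrow> label_Vs n r Ts t p \<in> {r<..k}"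
    and "p \<notin> set t \<Longrightarrow> label_Vs n r Ts t p \<in> {n - r<..n}"
proof -
  note D = data_okD[OF assms(1)]
  show "label_Vs n r Ts t p \<in> {r<..k}" if p: "p \<in> set t"
  proof -
    obtain l where "l < length t" "p = t ! l" using p by (auto simp: in_set_conv_nth)
    then show ?thesis using D label_Vs_nth by auto
  qed
  show "label_Vs n r Ts t p \<in> {n - r<..n}" if "p \<notin> set t"
    using that assms(2,3) D row_of_range[of Ts p] by (force simp: label_Vs_def)
qed

lemma label_in_idx:
  assumes "2 * k \<le> n" "data_ok n k r s t lam mu T Ts"
  shows "(label_V r T s, label_Vs n r Ts t) \<in> idx n k"
proof -
  note D = data_okD[OF assms(2)]
  have kn: "k \<le> n" using assms(1) by simp
  have "label_V r T s p \<in> {1..n}" if "p \<in> {1..k}" for p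
    using label_V_range[OF assms(2) that] kn D(1) by (cases "p \<in> set s") auto
  moreover have "label_Vs n r Ts t p \<in> {1..n}" if "p \<in> {1..k}" for p
    using label_Vs_range[OF assms(2) kn that] kn D(1) by (cases "p \<in> set t") auto
  moreover have "label_V r T s p = 0 \<and> label_Vs n r Ts t p = 0" if "p \<notin> {1..k}" for p
    using that D(6,7,9,12) by (auto simp: label_V_def label_Vs_def)
  ultimately show ?thesis by (auto simp: idx_def)
qed

lemma label_zip:
  assumes "data_ok n k r s t lam mu T Ts" "(i, j) \<in> set (zip s t)"
  shows "label_V r T s i = label_Vs n r Ts t j" "i \<in> {1..k}"
proof -
  note D = data_okD[OF assms(1)]
  obtain l where l: "l < length s" "l < length t" "i = s ! l" "j = t ! l"
    using assms(2) by (auto simp: set_zip)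
  then show "label_V r T s i = label_Vs n r Ts t j"
    using D label_V_nth label_Vs_nth by simp
  show "i \<in> {1..k}" by (metis l(1,3) D(6) nth_mem subsetD)
qed

lemma label_differ:
  assumes "2 * k \<le> n" "data_ok n k r s t lam mu T Ts" "\<forall>i < k - r. s ! i \<noteq> t ! i" "p \<in> {1..k}"
  shows "label_V r T s p \<noteq> label_Vs n r Ts t p"
proof (cases "p \<in> set s \<and> p \<in> set t")
  case True
  note D = data_okD[OF assms(2)]
  obtain i j where ij: "i < length s" "s ! i = p" "j < length t" "t ! j = p"
    using True by (auto simp: in_set_conv_nth)
  have "i \<noteq> j"
  proof
    assume "i = j"
    then show False using ij(1,2,4) assms(3) D(2) by auto
  qed
  moreover have "label_V r T s p = r + Suc i"
    using label_V_nth[OF D(4) ij(1)] ij(2) by simp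
  moreover have "label_Vs n r Ts t p = r + Suc j"
    using label_Vs_nth[OF D(5) ij(3)] ij(4) by simp
  ultimately show ?thesis by simp
next
  case False
  have kn: "k \<le> n" and gap: "r \<le> k" "k \<le> n - r" using assms(1) data_okD(1)[OF assms(2)] by auto
  note V = label_V_range[OF assms(2,4)] and Vs = label_Vs_range[OF assms(2) kn assms(4)]
  consider "p \<in> set s" "p \<notin> set t" | "p \<notin> set s" "p \<in> set t" | "p \<notin> set s" "p \<notin> set t"
    using False by blast
  then show ?thesis
  proof cases
    case 1
    then show ?thesis using V(1) Vs(2) gap by fastforce
  next
    case 2
    then show ?thesis using V(2) Vs(1) by fastforce
  next
    case 3
    then show ?thesis using V(2) Vs(2) gap by fastforce
  qed
qed

definition supported_off :: "nat set \<Rightarrow> nat set \<Rightarrow> (nat \<Rightarrow> nat) \<Rightarrow> (nat \<Rightarrow> nat) \<Rightarrow> tens \<Rightarrow> bool" where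
  "supported_off S S' a0 b0 w \<longleftrightarrow>
     (\<forall>a b. w (a, b) \<noteq> 0 \<longrightarrow> (\<forall>p. p \<notin> S \<longrightarrow> a p = a0 p) \<and> (\<forall>p. p \<notin> S' \<longrightarrow> b p = b0 p))"

lemma supported_off_basis_tens: "supported_off S S' a0 b0 (basis_tens (a0, b0))"
  by (simp add: supported_off_def basis_tens_def)

lemma supported_off_contr:
  assumes "supported_off S S' a0 b0 w"
  shows "supported_off (insert i S) (insert j S') a0 b0 (contr n k i j w)"
  unfolding supported_off_def
proof (intro allI impI)
  fix a b
  assume "contr n k i j w (a, b) \<noteq> 0"
  then have "(\<Sum>m\<in>{1..n}. w (a(i := m), b(j := m))) \<noteq> 0"
    by (auto simp: contr_def split: if_splits)
  then obtain m where "w (a(i := m), b(j := m)) \<noteq> 0"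
    using sum.not_neutral_contains_not_neutral by blast
  then have "\<forall>p. p \<notin> S \<longrightarrow> (a(i := m)) p = a0 p" "\<forall>p. p \<notin> S' \<longrightarrow> (b(j := m)) p = b0 p"
    using assms unfolding supported_off_def by blast+
  then show "(\<forall>p. p \<notin> insert i S \<longrightarrow> a p = a0 p) \<and> (\<forall>p. p \<notin> insert j S' \<longrightarrow> b p = b0 p)"
    by auto
qed

lemma contr_apply_center:
  assumes "supported_off S S' a0 b0 w" "i \<notin> S" "a0 i = b0 j" "i \<in> {1..k}" "(a0, b0) \<in> idx n k"
  shows "contr n k i j w (a0, b0) = w (a0, b0)"
proof -
  have "w (a0(i := m), b0(j := m)) = (if m = a0 i then w (a0, b0) else 0)" for m
  proof (cases "m = a0 i")
    case True
    then have "a0(i := m) = a0" "b0(j := m) = b0" using assms(3) by auto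
    then show ?thesis using True by simp
  next
    case False
    then have "(a0(i := m)) i \<noteq> a0 i" by simp
    then have "w (a0(i := m), b0(j := m)) = 0" using assms(1,2) unfolding supported_off_def by blast
    with False show ?thesis by simp
  qed
  moreover have "a0 i \<in> {1..n}" using assms(4,5) by (auto simp: idx_def)
  ultimately show ?thesis using assms(3,5) by (simp add: contr_def)
qed

lemma foldr_contr_basis_tens:
  assumes "distinct (map fst L)" "\<forall>(i, j)\<in>set L. a0 i = b0 j \<and> i \<in> {1..k}" "(a0, b0) \<in> idx n k"
  shows "foldr (\<lambda>(i, j). contr n k i j) L (basis_tens (a0, b0)) (a0, b0) = 1 \<and>
    supported_off (fst ` set L) (snd ` set L) a0 b0 (foldr (\<lambda>(i, j). contr n k i j) L (basis_tens (a0, b0)))"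
  using assms(1,2)
proof (induction L)
  case Nil
  then show ?case using supported_off_basis_tens[of "{}" "{}" a0 b0] by (simp add: basis_tens_def)
next
  case (Cons ij L)
  obtain i j where ij: "ij = (i, j)" by force
  define w where "w = foldr (\<lambda>(i, j). contr n k i j) L (basis_tens (a0, b0))"
  have i: "i \<notin> fst ` set L" "a0 i = b0 j" "i \<in> {1..k}" using Cons.prems ij by auto
  have "distinct (map fst L)" "\<forall>(i, j)\<in>set L. a0 i = b0 j \<and> i \<in> {1..k}"
    using Cons.prems by simp_all
  then have IH: "w (a0, b0) = 1" "supported_off (fst ` set L) (snd ` set L) a0 b0 w"
    using Cons.IH unfolding w_def by blast+
  have "contr n k i j w (a0, b0) = 1"
    using contr_apply_center[OF IH(2) i assms(3)] IH(1) by simp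
  moreover have "supported_off (insert i (fst ` set L)) (insert j (snd ` set L)) a0 b0 (contr n k i j w)"
    by (rule supported_off_contr[OF IH(2)])
  ultimately show ?case using ij by (simp add: w_def)
qed

lemma emap_apply_off_diagonal:
  assumes "\<forall>p\<in>{1..k}. a p \<noteq> b p"
  shows "emap n k w (a, b) = w (a, b)"
proof -
  have "set L \<subseteq> {1..k} \<Longrightarrow> foldr (one_minus_p n k) L w (a, b) = w (a, b)" for L
    using assms by (induction L) (auto simp: one_minus_p_def contr_def)
  moreover have "set [1..<k + 1] \<subseteq> {1..k}" by auto
  ultimately show ?thesis unfolding emap_def by blast
qed

lemma contr_list_basis_label:
  assumes n: "2 * k \<le> n" and D: "data_ok n k r s t lam mu T Ts"
  defines "C \<equiv> contr_list n k s t (basis_tens (label_V r T s, label_Vs n r Ts t))"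
  shows "C (label_V r T s, label_Vs n r Ts t) = 1"
    and "supported_off (set s) (set t) (label_V r T s) (label_Vs n r Ts t) C"
proof -
  note F = data_okD[OF D]
  have "distinct (map fst (zip s t))" using F(2,3,4) by simp
  moreover have "\<forall>(i, j)\<in>set (zip s t). label_V r T s i = label_Vs n r Ts t j \<and> i \<in> {1..k}"
    using label_zip[OF D] by blast
  ultimately have "C (label_V r T s, label_Vs n r Ts t) = 1 \<and>
      supported_off (fst ` set (zip s t)) (snd ` set (zip s t)) (label_V r T s) (label_Vs n r Ts t) C"
    unfolding C_def contr_list_def by (rule foldr_contr_basis_tens[OF _ _ label_in_idx[OF n D]])
  moreover have "fst ` set (zip s t) = set s" "snd ` set (zip s t) = set t"
    using F(2,3) by (simp_all flip: set_map)
  ultimately show "C (label_V r T s, label_Vs n r Ts t) = 1"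
    and "supported_off (set s) (set t) (label_V r T s) (label_Vs n r Ts t) C"
    by simp_all
qed

lemma yop_xprime_at_label:
  assumes n: "2 * k \<le> n" and D: "data_ok n k r s t lam mu T Ts"
  shows "yop n k T Ts s t (xprime n k T Ts s t) (label_V r T s, label_Vs n r Ts t)
    = of_nat (card (row_group T) * card (row_group Ts))"
proof -
  note F = data_okD[OF D]
  define a0 b0 where "a0 = label_V r T s" and "b0 = label_Vs n r Ts t"
  define C where "C = contr_list n k s t (basis_tens (a0, b0))"
  have C_at: "C (a0, b0) = 1" and "supported_off (set s) (set t) a0 b0 C"
    using contr_list_basis_label[OF n D] unfolding C_def a0_def b0_def by blast+
  then have C_supp: "C (a, b) \<noteq> 0 \<Longrightarrow> (\<forall>p. p \<notin> set s \<longrightarrow> a p = a0 p) \<and> (\<forall>p. p \<notin> set t \<longrightarrow> b p = b0 p)"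
    for a b
    unfolding supported_off_def by blast
  have "youngVs Ts C (a0, b0) = of_nat (card (row_group Ts)) * C (a0, b0)"
  proof (rule youngVs_apply_row_labelling[where h = "\<lambda>i. n - i + 1"])
    show "\<forall>p\<in>set (concat Ts). b0 p = n - row_of Ts p + 1"
      using F(12) by (simp add: b0_def label_Vs_def)
    show "inj_on (\<lambda>i. n - i + 1) {1..length Ts}"
      using F(1,13) n by (auto simp: inj_on_def)
    show "\<forall>p\<in>set (concat Ts). b' p = b0 p" if "C (a', b') \<noteq> 0" for a' b'
      using C_supp[OF that] F(12) by blast
  qed (use F(11) in simp)
  moreover have "youngV T (youngVs Ts C) (a0, b0) = of_nat (card (row_group T)) * youngVs Ts C (a0, b0)"
  proof (rule youngV_apply_row_labelling[where h = id])
    show "\<forall>p\<in>set (concat T). a0 p = id (row_of T p)"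
      using F(9) by (simp add: a0_def label_V_def)
    show "\<forall>p\<in>set (concat T). a' p = a0 p" if ne: "youngVs Ts C (a', b') \<noteq> 0" for a' b'
    proof -
      obtain \<sigma> where "C (a', b' \<circ> \<sigma>) \<noteq> 0" using ne by (rule youngVs_nonzeroE)
      then show ?thesis using C_supp F(9) by blast
    qed
  qed (use F(8) in simp_all)
  moreover have "xprime n k T Ts s t = basis_tens (a0, b0)"
    using F(1,2) by (simp add: xprime_eq_basis_tens a0_def b0_def)
  ultimately show ?thesis
    using C_at by (simp add: yop_def C_def a0_def b0_def)
qed

lemma emap_yop_xprime_nonzero:
  assumes "2 * k \<le> n" "data_ok n k r s t lam mu T Ts" "\<forall>i < k - r. s ! i \<noteq> t ! i"
  shows "emap n k (yop n k T Ts s t (xprime n k T Ts s t)) \<noteq> (\<lambda>_. 0)"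
proof -
  have "card (row_group T) \<noteq> 0" "card (row_group Ts) \<noteq> 0"
    using finite_row_group id_in_row_group by (auto simp: card_eq_0_iff)
  moreover have "emap n k (yop n k T Ts s t (xprime n k T Ts s t)) (label_V r T s, label_Vs n r Ts t)
      = yop n k T Ts s t (xprime n k T Ts s t) (label_V r T s, label_Vs n r Ts t)"
    using label_differ[OF assms] by (intro emap_apply_off_diagonal) blast
  ultimately show ?thesis using yop_xprime_at_label[OF assms(1,2)] by (metis of_nat_eq_0_iff mult_eq_0_iff)
qed

lemma emap_yop_xprime_eq_zero:
  assumes "0 < n" "data_ok n k r s t lam mu T Ts" "i < k - r" "s ! i = t ! i"
  shows "emap n k (yop n k T Ts s t (xprime n k T Ts s t)) = (\<lambda>_. 0)"
proof -
  note F = data_okD[OF assms(2)]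
  define p where "p = s ! i"
  have p: "p \<in> set s" "p \<in> set t" "(p, p) \<in> set (zip s t)"
    unfolding p_def using assms(3) F(2,3) nth_mem[of i s] nth_mem[of i t] assms(4)
    by (auto simp: in_set_zip intro!: exI[of _ i])
  then have pk: "p \<in> {1..k}" using F(6) by blast
  have "contracted_in_slot n k p (contr_list n k s t (xprime n k T Ts s t))"
    unfolding contr_list_def using F(2-5) p(3) by (intro contracted_in_slot_foldr_contr[OF pk]) simp_all
  then have "contracted_in_slot n k p (yop n k T Ts s t (xprime n k T Ts s t))"
    unfolding yop_def using p(1,2) F(9,12)
    by (intro contracted_in_slot_youngV contracted_in_slot_youngVs) blast+
  then show ?thesis by (rule emap_eq_zero_if_contracted_in_slot[OF assms(1) pk])
qed

lemma emap_yop_xprime_nonzero_iff: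
  assumes "2 * k \<le> n" "data_ok n k r s t lam mu T Ts"
  shows "emap n k (yop n k T Ts s t (xprime n k T Ts s t)) \<noteq> (\<lambda>_. 0) \<longleftrightarrow> (\<forall>i < k - r. s ! i \<noteq> t ! i)"
proof
  assume "emap n k (yop n k T Ts s t (xprime n k T Ts s t)) \<noteq> (\<lambda>_. 0)"
  moreover have "0 < n" if "i < k - r" for i using that assms(1) by simp
  ultimately show "\<forall>i < k - r. s ! i \<noteq> t ! i" using emap_yop_xprime_eq_zero[OF _ assms(2)] by blast
qed (rule emap_yop_xprime_nonzero[OF assms])

section \<open>Linearity of e and linear spans\<close>

definition linear_tens :: "(tens \<Rightarrow> tens) \<Rightarrow> bool" where
  "linear_tens f \<longleftrightarrow> (\<forall>(F :: tens set) c \<phi>. finite F \<longrightarrow>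
     f (\<lambda>z. \<Sum>v\<in>F. c v * \<phi> v z) = (\<lambda>z. \<Sum>v\<in>F. c v * f (\<phi> v) z))"

lemma linear_tensD:
  fixes F :: "tens set"
  assumes "linear_tens f" "finite F"
  shows "f (\<lambda>z. \<Sum>v\<in>F. c v * \<phi> v z) = (\<lambda>z. \<Sum>v\<in>F. c v * f (\<phi> v) z)"
  using assms(1)[unfolded linear_tens_def, rule_format, OF assms(2)] .

lemma linear_tens_comp:
  assumes "linear_tens f" "linear_tens g"
  shows "linear_tens (f \<circ> g)"
  unfolding linear_tens_def
proof (intro allI impI)
  fix F :: "tens set" and c \<phi>
  assume F: "finite F"
  show "(f \<circ> g) (\<lambda>z. \<Sum>v\<in>F. c v * \<phi> v z) = (\<lambda>z. \<Sum>v\<in>F. c v * (f \<circ> g) (\<phi> v) z)"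
    by (simp add: linear_tensD[OF assms(2) F] linear_tensD[OF assms(1) F])
qed

lemma linear_tens_foldr: "(\<And>x. x \<in> set L \<Longrightarrow> linear_tens (g x)) \<Longrightarrow> linear_tens (foldr g L)"
proof (induction L)
  case Nil
  then show ?case by (simp add: linear_tens_def)
next
  case (Cons x L)
  then have "linear_tens (g x)" "linear_tens (foldr g L)" by simp_all
  then show ?case unfolding foldr_Cons by (rule linear_tens_comp)
qed

lemma linear_tens_contr: "linear_tens (contr n k i j)"
  unfolding linear_tens_def
proof (intro allI impI ext, clarify)
  fix F :: "tens set" and c \<phi> a b
  show "contr n k i j (\<lambda>z. \<Sum>v\<in>F. c v * \<phi> v z) (a, b) = (\<Sum>v\<in>F. c v * contr n k i j (\<phi> v) (a, b))"
  proof (cases "(a, b) \<in> idx n k \<and> a i = b j")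
    case True
    then have "contr n k i j (\<lambda>z. \<Sum>v\<in>F. c v * \<phi> v z) (a, b)
        = (\<Sum>m\<in>{1..n}. \<Sum>v\<in>F. c v * \<phi> v (a(i := m), b(j := m)))"
      by (simp add: contr_def)
    also have "\<dots> = (\<Sum>v\<in>F. c v * (\<Sum>m\<in>{1..n}. \<phi> v (a(i := m), b(j := m))))"
      by (subst sum.swap) (simp add: sum_distrib_left)
    finally show ?thesis using True by (simp add: contr_def)
  next
    case False
    then have "contr n k i j x (a, b) = 0" for x unfolding contr_def by auto
    then show ?thesis by simp
  qed
qed

lemma linear_tens_one_minus_p: "linear_tens (one_minus_p n k q)"
  unfolding linear_tens_def
proof (intro allI impI ext)
  fix F :: "tens set" and c \<phi> z
  assume F: "finite F"
  have "one_minus_p n k q (\<lambda>z. \<Sum>v\<in>F. c v * \<phi> v z) z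
      = (\<Sum>v\<in>F. c v * \<phi> v z) - 1 / of_nat n * (\<Sum>v\<in>F. c v * contr n k q q (\<phi> v) z)"
    unfolding one_minus_p_def linear_tensD[OF linear_tens_contr F] ..
  also have "\<dots> = (\<Sum>v\<in>F. c v * \<phi> v z - 1 / of_nat n * (c v * contr n k q q (\<phi> v) z))"
    by (simp only: sum_distrib_left sum_subtractf)
  also have "\<dots> = (\<Sum>v\<in>F. c v * one_minus_p n k q (\<phi> v) z)"
    unfolding one_minus_p_def by (simp only: right_diff_distrib mult.left_commute)
  finally show "one_minus_p n k q (\<lambda>z. \<Sum>v\<in>F. c v * \<phi> v z) z = (\<Sum>v\<in>F. c v * one_minus_p n k q (\<phi> v) z)" .
qed

lemma linear_tens_emap: "linear_tens (emap n k)"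
proof -
  have "emap n k = foldr (one_minus_p n k) [1..<k + 1]" by (simp add: emap_def fun_eq_iff)
  show ?thesis unfolding \<open>emap n k = _\<close> by (rule linear_tens_foldr) (rule linear_tens_one_minus_p)
qed

lemma lin_spanE:
  assumes "f \<in> lin_span S"
  obtains F c where "finite F" "F \<subseteq> S" "f = (\<lambda>z. \<Sum>v\<in>F. c v * v z)"
  using assms unfolding lin_span_def by blast

lemma lin_span_zero: "(\<lambda>_. 0) \<in> lin_span S"
  unfolding lin_span_def by (intro CollectI exI[of _ "{}"]) simp

lemma lin_span_superset: "v \<in> S \<Longrightarrow> v \<in> lin_span S"
  unfolding lin_span_def by (intro CollectI exI[of _ "{v}"] exI[of _ "\<lambda>_. 1"]) simp

lemma lin_span_add:
  assumes "f \<in> lin_span S" "g \<in> lin_span S"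
  shows "(\<lambda>z. f z + g z) \<in> lin_span S"
proof -
  obtain F1 c1 where 1: "finite F1" "F1 \<subseteq> S" "f = (\<lambda>z. \<Sum>v\<in>F1. c1 v * v z)"
    using assms(1) by (rule lin_spanE)
  obtain F2 c2 where 2: "finite F2" "F2 \<subseteq> S" "g = (\<lambda>z. \<Sum>v\<in>F2. c2 v * v z)"
    using assms(2) by (rule lin_spanE)
  define c where "c v = (if v \<in> F1 then c1 v else 0) + (if v \<in> F2 then c2 v else 0)" for v
  have "(\<Sum>v\<in>F1 \<union> F2. c v * v z) = (\<Sum>v\<in>F1. c1 v * v z) + (\<Sum>v\<in>F2. c2 v * v z)" for z
  proof -
    have "(\<Sum>v\<in>F1 \<union> F2. c v * v z)
        = (\<Sum>v\<in>F1 \<union> F2. if v \<in> F1 then c1 v * v z else 0) + (\<Sum>v\<in>F1 \<union> F2. if v \<in> F2 then c2 v * v z else 0)"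
      unfolding sum.distrib[symmetric] by (rule sum.cong) (auto simp: c_def distrib_right)
    also have "\<dots> = (\<Sum>v\<in>F1. c1 v * v z) + (\<Sum>v\<in>F2. c2 v * v z)"
      using 1(1) 2(1) by (simp add: sum.If_cases Int_absorb1 Int_absorb2)
    finally show ?thesis .
  qed
  then show ?thesis unfolding lin_span_def using 1 2
    by (intro CollectI exI[of _ "F1 \<union> F2"] exI[of _ c]) simp
qed

lemma lin_span_scale:
  assumes "f \<in> lin_span S"
  shows "(\<lambda>z. a * f z) \<in> lin_span S"
proof -
  obtain F c where F: "finite F" "F \<subseteq> S" "f = (\<lambda>z. \<Sum>v\<in>F. c v * v z)"
    using assms by (rule lin_spanE)
  then have "(\<lambda>z. a * f z) = (\<lambda>z. \<Sum>v\<in>F. (a * c v) * v z)"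
    by (simp add: sum_distrib_left mult.assoc)
  then show ?thesis unfolding lin_span_def using F
    by (intro CollectI exI[of _ F] exI[of _ "\<lambda>v. a * c v"]) simp
qed

lemma lin_span_lin_comb:
  assumes "finite F" "\<And>v. v \<in> F \<Longrightarrow> \<phi> v \<in> lin_span S"
  shows "(\<lambda>z. \<Sum>v\<in>F. c v * \<phi> v z) \<in> lin_span S"
  using assms
proof (induction F rule: finite_induct)
  case empty
  then show ?case using lin_span_zero by simp
next
  case (insert x F)
  then have "(\<lambda>z. c x * \<phi> x z + (\<Sum>v\<in>F. c v * \<phi> v z)) \<in> lin_span S"
    by (intro lin_span_add lin_span_scale) simp_all
  then show ?case using insert(1,2) by simp
qed

lemma linear_tens_image_lin_span:
  assumes "linear_tens f"
  shows "f ` lin_span S = lin_span (f ` S)"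
proof
  show "f ` lin_span S \<subseteq> lin_span (f ` S)"
  proof
    fix w
    assume "w \<in> f ` lin_span S"
    then obtain F c where F: "finite F" "F \<subseteq> S" and w: "w = f (\<lambda>z. \<Sum>v\<in>F. c v * v z)"
      by (auto elim: lin_spanE)
    have "w = (\<lambda>z. \<Sum>v\<in>F. c v * f v z)"
      unfolding w using linear_tensD[OF assms F(1), of c "\<lambda>v. v"] by simp
    also have "\<dots> \<in> lin_span (f ` S)"
      using F by (intro lin_span_lin_comb lin_span_superset) auto
    finally show "w \<in> lin_span (f ` S)" .
  qed
next
  show "lin_span (f ` S) \<subseteq> f ` lin_span S"
  proof
    fix w
    assume "w \<in> lin_span (f ` S)"
    then obtain F c where F: "finite F" "F \<subseteq> f ` S" and w: "w = (\<lambda>z. \<Sum>u\<in>F. c u * u z)"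
      by (rule lin_spanE)
    define \<phi> where "\<phi> = inv_into S f"
    have \<phi>: "\<phi> u \<in> S" "f (\<phi> u) = u" if "u \<in> F" for u
      using F(2) that by (auto simp: \<phi>_def inv_into_into f_inv_into_f)
    have "w = f (\<lambda>z. \<Sum>u\<in>F. c u * \<phi> u z)"
      unfolding w linear_tensD[OF assms F(1)] using \<phi>(2) by (auto intro!: sum.cong)
    moreover have "(\<lambda>z. \<Sum>u\<in>F. c u * \<phi> u z) \<in> lin_span S"
      using F(1) \<phi>(1) by (intro lin_span_lin_comb lin_span_superset)
    ultimately show "w \<in> f ` lin_span S" by blast
  qed
qed

lemma lin_span_Diff_zero: "lin_span (S - {\<lambda>_. 0}) = lin_span S"
proof
  show "lin_span (S - {\<lambda>_. 0}) \<subseteq> lin_span S"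
    unfolding lin_span_def by blast
next
  show "lin_span S \<subseteq> lin_span (S - {\<lambda>_. 0})"
  proof
    fix w
    assume "w \<in> lin_span S"
    then obtain F c where F: "finite F" "F \<subseteq> S" and w: "w = (\<lambda>z. \<Sum>v\<in>F. c v * v z)"
      by (rule lin_spanE)
    have "w = (\<lambda>z. \<Sum>v\<in>F - {\<lambda>_. 0}. c v * v z)"
      unfolding w using F(1) by (intro ext sum.mono_neutral_right) auto
    then show "w \<in> lin_span (S - {\<lambda>_. 0})"
      unfolding lin_span_def using F by blast
  qed
qed

lemma lin_span_nonzero_iff: "(\<exists>v\<in>lin_span S. v \<noteq> (\<lambda>_. 0)) \<longleftrightarrow> (\<exists>v\<in>S. v \<noteq> (\<lambda>_. 0))"
proof
  assume "\<exists>v\<in>lin_span S. v \<noteq> (\<lambda>_. 0)"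
  then obtain F c where F: "F \<subseteq> S" "(\<lambda>z. \<Sum>v\<in>F. c v * v z) \<noteq> (\<lambda>_. 0)"
    by (auto elim: lin_spanE)
  show "\<exists>v\<in>S. v \<noteq> (\<lambda>_. 0)"
  proof (rule ccontr)
    assume "\<not> (\<exists>v\<in>S. v \<noteq> (\<lambda>_. 0))"
    then have "\<forall>v\<in>F. v = (\<lambda>_. 0)" using F(1) by blast
    then have "(\<lambda>z. \<Sum>v\<in>F. c v * v z) = (\<lambda>_. 0)" by (auto intro!: ext sum.neutral)
    with F(2) show False ..
  qed
qed (use lin_span_superset in blast)

lemma emap_Mlm_nonzero_iff:
  assumes "2 * k \<le> n" "is_partition r lam"
  shows "(\<exists>v\<in>Mlm n k lam mu. emap n k v \<noteq> (\<lambda>_. 0)) \<longleftrightarrow>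
    (\<exists>s t T Ts. data_ok n k r s t lam mu T Ts \<and> (\<forall>i < k - r. s ! i \<noteq> t ! i))"
proof -
  define G where "G = {yop n k T Ts s t (xprime n k T Ts s t) | s t T Ts.
    data_ok n k (sum_list lam) s t lam mu T Ts}"
  have r: "sum_list lam = r" using assms(2) by (simp add: is_partition_def)
  have "(\<exists>v\<in>Mlm n k lam mu. emap n k v \<noteq> (\<lambda>_. 0)) \<longleftrightarrow> (\<exists>w\<in>emap n k ` lin_span G. w \<noteq> (\<lambda>_. 0))"
    unfolding Mlm_def G_def by blast
  also have "\<dots> \<longleftrightarrow> (\<exists>w\<in>emap n k ` G. w \<noteq> (\<lambda>_. 0))"
    unfolding linear_tens_image_lin_span[OF linear_tens_emap] lin_span_nonzero_iff ..
  also have "\<dots> \<longleftrightarrow> (\<exists>s t T Ts. data_ok n k r s t lam mu T Ts \<and>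
      emap n k (yop n k T Ts s t (xprime n k T Ts s t)) \<noteq> (\<lambda>_. 0))"
    unfolding G_def r by blast
  also have "\<dots> \<longleftrightarrow> (\<exists>s t T Ts. data_ok n k r s t lam mu T Ts \<and> (\<forall>i < k - r. s ! i \<noteq> t ! i))"
    using emap_yop_xprime_nonzero_iff[OF assms(1)] by blast
  finally show ?thesis .
qed

lemma emap_image_Mlm:
  assumes "sum_list lam = r"
  shows "emap n k ` Mlm n k lam mu =
    lin_span {emap n k (yop n k T Ts s t (xprime n k T Ts s t)) | s t T Ts.
      data_ok n k r s t lam mu T Ts \<and> emap n k (yop n k T Ts s t (xprime n k T Ts s t)) \<noteq> (\<lambda>_. 0)}"
proof -
  define G where "G = {yop n k T Ts s t (xprime n k T Ts s t) | s t T Ts.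
    data_ok n k (sum_list lam) s t lam mu T Ts}"
  have "emap n k ` Mlm n k lam mu = lin_span (emap n k ` G - {\<lambda>_. 0})"
    unfolding Mlm_def G_def[symmetric] linear_tens_image_lin_span[OF linear_tens_emap] lin_span_Diff_zero ..
  also have "emap n k ` G - {\<lambda>_. 0} = {emap n k (yop n k T Ts s t (xprime n k T Ts s t)) | s t T Ts.
      data_ok n k r s t lam mu T Ts \<and> emap n k (yop n k T Ts s t (xprime n k T Ts s t)) \<noteq> (\<lambda>_. 0)}"
    unfolding G_def assms by (auto intro!: imageI)
  finally show ?thesis .
qed

theorem lemma3p4:
  fixes n k :: nat
  assumes "2 * k \<le> n"
  shows "(\<forall>r s t lam mu T Ts. data_ok n k r s t lam mu T Ts \<longrightarrow>
           (emap n k (yop n k T Ts s t (xprime n k T Ts s t)) \<noteq> (\<lambda>_. 0) \<longleftrightarrow>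
            (\<forall>i < k - r. s ! i \<noteq> t ! i))) \<and>
         (\<forall>r lam mu. r \<le> k \<and> is_partition r lam \<and> is_partition r mu \<longrightarrow>
           ((\<exists>v\<in>Mlm n k lam mu. emap n k v \<noteq> (\<lambda>_. 0)) \<longleftrightarrow>
            (\<exists>s t T Ts. data_ok n k r s t lam mu T Ts \<and> (\<forall>i < k - r. s ! i \<noteq> t ! i)))) \<and>
         (\<forall>r lam mu. (\<exists>s t T Ts. data_ok n k r s t lam mu T Ts \<and> (\<forall>i < k - r. s ! i \<noteq> t ! i)) \<longrightarrow>
           emap n k ` Mlm n k lam mu =
           lin_span {emap n k (yop n k T Ts s t (xprime n k T Ts s t)) | s t T Ts.
                       data_ok n k r s t lam mu T Ts \<and>
                       emap n k (yop n k T Ts s t (xprime n k T Ts s t)) \<noteq> (\<lambda>_. 0)})"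
proof (intro conjI allI impI)
  fix r s t lam mu T Ts
  assume "data_ok n k r s t lam mu T Ts"
  then show "emap n k (yop n k T Ts s t (xprime n k T Ts s t)) \<noteq> (\<lambda>_. 0) \<longleftrightarrow> (\<forall>i < k - r. s ! i \<noteq> t ! i)"
    by (rule emap_yop_xprime_nonzero_iff[OF assms])
next
  fix r lam mu
  assume "r \<le> k \<and> is_partition r lam \<and> is_partition r mu"
  then show "(\<exists>v\<in>Mlm n k lam mu. emap n k v \<noteq> (\<lambda>_. 0)) \<longleftrightarrow>
      (\<exists>s t T Ts. data_ok n k r s t lam mu T Ts \<and> (\<forall>i < k - r. s ! i \<noteq> t ! i))"
    using emap_Mlm_nonzero_iff[OF assms] by blast
next
  fix r lam mu
  assume "\<exists>s t T Ts. data_ok n k r s t lam mu T Ts \<and> (\<forall>i < k - r. s ! i \<noteq> t ! i)"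
  then have "sum_list lam = r" by (auto simp: data_ok_def is_partition_def)
  then show "emap n k ` Mlm n k lam mu =
      lin_span {emap n k (yop n k T Ts s t (xprime n k T Ts s t)) | s t T Ts.
        data_ok n k r s t lam mu T Ts \<and> emap n k (yop n k T Ts s t (xprime n k T Ts s t)) \<noteq> (\<lambda>_. 0)}"
    by (rule emap_image_Mlm)
qed

end
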